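(* There is no functional $M$ of type $3$ with $\mathsf{PR}(M)$ which is Kleene-computable (via the schemes S1–S9) in some functional $H$ of type $2$.
   Context: $C=2^{\mathbb N}$ is Cantor space. For $f\in C$ and $n\in\mathbb N$, $\overline{f}n=\langle f(0),\dots,f(n-1)\rangle$, and for a finite binary sequence $\sigma$, $[\sigma]$ is the set of $g\in C$ extending $\sigma$. For $F,G:C\to\mathbb N$, $\mathsf{LOC}(F,G)$ means $(\forall f,g\in C)\big(g\in[\overline{f}G(f)]\to F(g)\le G(f)\big)$ ($G$ is a realiser for local boundedness of $F$). For a functional $M$ mapping functionals $G:C\to\mathbb N$ to natural numbers, $\mathsf{PR}(M)$ means $(\forall F,G:C\to\mathbb N)\big(\mathsf{LOC}(F,G)\to(\forall g\in C)(F(g)\le M(G))\big)$; such $M$ is called a Pincherle realiser (PR). Computability is Kleene's higher-order computability given by the schemes S1–S9. *)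

theory Defs
  imports Main "HOL-Library.Countable"
begin

text \<open>Type-1 objects are nat => nat, type-2 objects are (nat => nat) => nat,
  type-3 objects are ((nat => nat) => nat) => nat.  Functionals F, G : C -> N are represented
  by type-2 objects, of which only the restriction to C matters.\<close>

definition cantor :: "(nat \<Rightarrow> nat) set" where
  "cantor = {f. \<forall>n. f n \<le> 1}"

definition cbar :: "(nat \<Rightarrow> nat) \<Rightarrow> nat \<Rightarrow> nat list" where
  "cbar f n = map f [0..<n]"

definition cyl :: "nat list \<Rightarrow> (nat \<Rightarrow> nat) set" where
  "cyl \<sigma> = {g \<in> cantor. cbar g (length \<sigma>) = \<sigma>}"

definition LOC :: "((nat \<Rightarrow> nat) \<Rightarrow> nat) \<Rightarrow> ((nat \<Rightarrow> nat) \<Rightarrow> nat) \<Rightarrow> bool" where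
  "LOC F G \<longleftrightarrow> (\<forall>f\<in>cantor. \<forall>g\<in>cantor. g \<in> cyl (cbar f (G f)) \<longrightarrow> F g \<le> G f)"

definition PR :: "(((nat \<Rightarrow> nat) \<Rightarrow> nat) \<Rightarrow> nat) \<Rightarrow> bool" where
  "PR M \<longleftrightarrow> (\<forall>F G. LOC F G \<longrightarrow> (\<forall>g\<in>cantor. F g \<le> M G))"

text \<open>Indices are elements of a countable datatype; S9 decodes a natural number
  via from_nat.  Argument lists consist of objects of types 0, 1, 2; in a
  computation whose inputs have type at most 2, all arguments have type at most 2.\<close>

datatype prog =
    S1
  | S2 nat
  | S3
  | S4 prog prog
  | S5 prog prog
  | S6 nat prog
  | S7
  | S8 prog
  | S9

instance prog :: countable by countable_datatype

datatype arg = A0 nat | A1 "nat \<Rightarrow> nat" | A2 "(nat \<Rightarrow> nat) \<Rightarrow> nat"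

definition swap_at :: "nat \<Rightarrow> 'a list \<Rightarrow> 'a list" where
  "swap_at k xs = xs[k := xs ! Suc k, Suc k := xs ! k]"

inductive kleene :: "prog \<Rightarrow> arg list \<Rightarrow> nat \<Rightarrow> bool" where
  k1: "kleene S1 (A0 a # xs) (Suc a)"
| k2: "kleene (S2 q) xs q"
| k3: "kleene S3 (A0 a # xs) a"
| k4: "kleene e2 xs b \<Longrightarrow> kleene e1 (A0 b # xs) c \<Longrightarrow> kleene (S4 e1 e2) xs c"
| k5_0: "kleene e1 xs c \<Longrightarrow> kleene (S5 e1 e2) (A0 0 # xs) c"
| k5_S: "kleene (S5 e1 e2) (A0 a # xs) b \<Longrightarrow> kleene e2 (A0 b # A0 a # xs) c
         \<Longrightarrow> kleene (S5 e1 e2) (A0 (Suc a) # xs) c"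
| k6: "Suc k < length xs \<Longrightarrow> kleene e1 (swap_at k xs) c \<Longrightarrow> kleene (S6 k e1) xs c"
| k7: "kleene S7 (A1 f # A0 a # xs) (f a)"
| k8: "(\<forall>a. kleene e1 (A0 a # A2 F # xs) (g a)) \<Longrightarrow> kleene (S8 e1) (A2 F # xs) (F g)"
| k9: "kleene (from_nat d) xs c \<Longrightarrow> kleene S9 (A0 d # xs) c"

definition computable_in :: "(((nat \<Rightarrow> nat) \<Rightarrow> nat) \<Rightarrow> nat) \<Rightarrow> ((nat \<Rightarrow> nat) \<Rightarrow> nat) \<Rightarrow> bool" where
  "computable_in M H \<longleftrightarrow> (\<exists>e. \<forall>G. kleene e [A2 G, A2 H] (M G))"

end

theory Submission
  imports Defs
begin

text \<open>By Zorn's lemma there is a maximal partial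
  functional R such that each value R(g) is 1 + the code of an index computing g from R and H.
  Maximality closes R under the functions built in S8 steps, so for every total G extending R the
  computation of M G from H only consults G on the domain of R, and M is constant, say c, on the
  extensions of R. Distinct functions in the domain receive distinct codes, so one can diagonalise:
  some g0 \<in> C has g0(n) \<noteq> f(n) whenever R(f) = n + 1, i.e. g0 avoids the neighbourhood
  cyl (cbar f R(f)) of each f in the domain. Extending R by G(g0) = c + 1 and, elsewhere, by 1 + the
  first place where f differs from g0 yields a realiser G for the local boundedness of the functional
  that is c + 1 at g0 and 0 otherwise, while M G = c.\<close>

datatype sarg = SN nat | SG | SH

instance sarg :: countable by countable_datatype

type_synonym partial_type2 = "((nat \<Rightarrow> nat) \<times> nat) set"

text \<open>Kleene computation on symbolic argument lists in which G is only known through the partial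
  functional R: applying S8 to G succeeds only at functions in the domain of R. S7 has no
  counterpart, as no type-1 argument ever occurs.\<close>

inductive rkleene :: "partial_type2 \<Rightarrow> ((nat \<Rightarrow> nat) \<Rightarrow> nat) \<Rightarrow> prog \<Rightarrow> sarg list \<Rightarrow> nat \<Rightarrow> bool"
  for R :: partial_type2 and H :: "(nat \<Rightarrow> nat) \<Rightarrow> nat" where
  r1: "rkleene R H S1 (SN a # xs) (Suc a)"
| r2: "rkleene R H (S2 q) xs q"
| r3: "rkleene R H S3 (SN a # xs) a"
| r4: "rkleene R H e2 xs b \<Longrightarrow> rkleene R H e1 (SN b # xs) c \<Longrightarrow> rkleene R H (S4 e1 e2) xs c"
| r5_0: "rkleene R H e1 xs c \<Longrightarrow> rkleene R H (S5 e1 e2) (SN 0 # xs) c"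
| r5_S: "rkleene R H (S5 e1 e2) (SN a # xs) b \<Longrightarrow> rkleene R H e2 (SN b # SN a # xs) c
         \<Longrightarrow> rkleene R H (S5 e1 e2) (SN (Suc a) # xs) c"
| r6: "Suc k < length xs \<Longrightarrow> rkleene R H e1 (swap_at k xs) c \<Longrightarrow> rkleene R H (S6 k e1) xs c"
| r8_G: "(\<forall>a. rkleene R H e1 (SN a # SG # xs) (g a)) \<Longrightarrow> (g, v) \<in> R \<Longrightarrow> rkleene R H (S8 e1) (SG # xs) v"
| r8_H: "(\<forall>a. rkleene R H e1 (SN a # SH # xs) (g a)) \<Longrightarrow> rkleene R H (S8 e1) (SH # xs) (H g)"
| r9: "rkleene R H (from_nat d) xs c \<Longrightarrow> rkleene R H S9 (SN d # xs) c"

inductive_cases rkleene_elims: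
  "rkleene R H S1 xs c" "rkleene R H (S2 q) xs c" "rkleene R H S3 xs c"
  "rkleene R H (S4 e1 e2) xs c" "rkleene R H (S5 e1 e2) xs c" "rkleene R H (S6 k e1) xs c"
  "rkleene R H (S8 e1) xs c" "rkleene R H S9 xs c"

lemma rkleene_mono: "rkleene R H e xs c \<Longrightarrow> R \<subseteq> R' \<Longrightarrow> rkleene R' H e xs c"
  by (induction rule: rkleene.induct) (auto intro: rkleene.intros)

lemma rkleene_deterministic:
  assumes "single_valued R"
  shows "rkleene R H e xs c \<Longrightarrow> rkleene R H e xs c' \<Longrightarrow> c = c'"
proof (induction arbitrary: c' rule: rkleene.induct)
  case r1
  from r1.prems show ?case by (rule rkleene_elims(1)) simp
next
  case r2
  from r2.prems show ?case by (rule rkleene_elims(2)) simp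
next
  case r3
  from r3.prems show ?case by (rule rkleene_elims(3)) simp
next
  case r4
  from r4.prems show ?case by (rule rkleene_elims(4)) (use r4.IH in blast)
next
  case r5_0
  from r5_0.prems show ?case by (rule rkleene_elims(5)) (use r5_0.IH in simp_all)
next
  case r5_S
  from r5_S.prems show ?case by (rule rkleene_elims(5)) (use r5_S.IH in auto)
next
  case r6
  from r6.prems show ?case by (rule rkleene_elims(6)) (use r6.IH in simp)
next
  case (r8_G e1 xs g v)
  from r8_G.prems obtain g' where "\<forall>a. rkleene R H e1 (SN a # SG # xs) (g' a)" "(g', c') \<in> R"
    by (rule rkleene_elims(7)) auto
  with r8_G.IH have "(g, c') \<in> R" by (metis ext)
  with \<open>(g, v) \<in> R\<close> show ?case using assms by (auto dest: single_valuedD)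
next
  case (r8_H e1 xs g)
  from r8_H.prems obtain g' where "\<forall>a. rkleene R H e1 (SN a # SH # xs) (g' a)" "c' = H g'"
    by (rule rkleene_elims(7)) auto
  with r8_H.IH show ?case by (metis ext)
next
  case r9
  from r9.prems show ?case by (rule rkleene_elims(8)) (use r9.IH in simp)
qed

fun sarg_val :: "((nat \<Rightarrow> nat) \<Rightarrow> nat) \<Rightarrow> ((nat \<Rightarrow> nat) \<Rightarrow> nat) \<Rightarrow> sarg \<Rightarrow> arg" where
  "sarg_val G H (SN n) = A0 n"
| "sarg_val G H SG = A2 G"
| "sarg_val G H SH = A2 H"

lemma A0_eq_sarg_val_iff [simp]: "A0 a = sarg_val G H y \<longleftrightarrow> y = SN a"
  by (cases y) auto

lemma A1_neq_sarg_val [simp]: "A1 f \<noteq> sarg_val G H y"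
  by (cases y) auto

lemma swap_at_map: "Suc k < length xs \<Longrightarrow> swap_at k (map f xs) = map f (swap_at k xs)"
  by (simp add: swap_at_def map_update)

definition rkleene_closed :: "((nat \<Rightarrow> nat) \<Rightarrow> nat) \<Rightarrow> partial_type2 \<Rightarrow> bool" where
  "rkleene_closed H R \<longleftrightarrow> (\<forall>e xs g. (\<forall>a. rkleene R H e (SN a # xs) (g a)) \<longrightarrow> g \<in> Domain R)"

lemma kleene_imp_rkleene:
  assumes closed: "rkleene_closed H R" and extends: "\<forall>(g, v)\<in>R. G g = v"
  shows "kleene e xs c \<Longrightarrow> xs = map (sarg_val G H) ys \<Longrightarrow> rkleene R H e ys c"
proof (induction arbitrary: ys rule: kleene.induct)
  case k1 then show ?case by (auto simp: Cons_eq_map_conv intro: r1)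
next
  case k2 show ?case by (rule r2)
next
  case k3 then show ?case by (auto simp: Cons_eq_map_conv intro: r3)
next
  case (k4 e2 xs b e1 c)
  have "rkleene R H e1 (SN b # ys) c" using k4.IH(2)[of "SN b # ys"] k4.prems by simp
  with k4.IH(1)[OF k4.prems] show ?case by (rule r4)
next
  case k5_0 then show ?case by (auto simp: Cons_eq_map_conv intro: r5_0)
next
  case (k5_S e1 e2 a xs b c)
  then obtain zs where ys: "ys = SN (Suc a) # zs" "xs = map (sarg_val G H) zs"
    by (auto simp: Cons_eq_map_conv)
  with k5_S.IH have "rkleene R H (S5 e1 e2) (SN a # zs) b" "rkleene R H e2 (SN b # SN a # zs) c"
    by simp_all
  with ys show ?case by (simp add: r5_S)
next
  case k6 then show ?case by (auto simp: swap_at_map intro: r6)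
next
  case k7 then show ?case by (auto simp: Cons_eq_map_conv)
next
  case (k8 e1 F xs g)
  then obtain y ys' where y: "ys = y # ys'" "A2 F = sarg_val G H y" "xs = map (sarg_val G H) ys'"
    by (auto simp: Cons_eq_map_conv)
  with k8.IH have IH: "\<forall>a. rkleene R H e1 (SN a # y # ys') (g a)"
    by simp
  show ?case
  proof (cases y)
    case SG
    with closed IH obtain v where "(g, v) \<in> R"
      unfolding rkleene_closed_def by blast
    with extends y SG IH show ?thesis by (auto intro: r8_G)
  next
    case SH
    with y IH show ?thesis by (auto intro: r8_H)
  qed (use y in simp)
next
  case k9 then show ?case by (auto simp: Cons_eq_map_conv intro: r9)
qed

lemma single_valued_The: "single_valued R \<Longrightarrow> (x, y) \<in> R \<Longrightarrow> (THE y. (x, y) \<in> R) = y"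
  by (blast intro: the_equality dest: single_valuedD)

text \<open>The shift by one keeps 0 out of the range: the neighbourhood of length 0 is all of C.\<close>

definition index_coded :: "((nat \<Rightarrow> nat) \<Rightarrow> nat) \<Rightarrow> partial_type2 \<Rightarrow> bool" where
  "index_coded H R \<longleftrightarrow> single_valued R \<and>
     (\<forall>(g, v)\<in>R. \<exists>e xs. v = Suc (to_nat (e, xs)) \<and> (\<forall>a. rkleene R H e (SN a # xs) (g a)))"

lemma index_coded_injective:
  assumes "index_coded H R"
  shows "single_valued (R\<inverse>)"
proof (rule single_valuedI)
  fix v g g' assume "(v, g) \<in> R\<inverse>" "(v, g') \<in> R\<inverse>"
  with assms obtain e xs e' xs' where
    v: "v = Suc (to_nat (e, xs))" "v = Suc (to_nat (e', xs'))" and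
    g: "\<forall>a. rkleene R H e (SN a # xs) (g a)" and g': "\<forall>a. rkleene R H e' (SN a # xs') (g' a)"
    unfolding index_coded_def by blast
  from v have "e' = e" "xs' = xs" by simp_all
  moreover from assms have "single_valued R" unfolding index_coded_def by blast
  ultimately have "g a = g' a" for a using g g' rkleene_deterministic by blast
  then show "g = g'" ..
qed

lemma index_coded_Union_chain:
  assumes "C \<in> chains {R. index_coded H R}"
  shows "index_coded H (\<Union>C)"
proof -
  have coded: "\<And>R. R \<in> C \<Longrightarrow> index_coded H R"
    and chain: "\<And>R S. R \<in> C \<Longrightarrow> S \<in> C \<Longrightarrow> R \<subseteq> S \<or> S \<subseteq> R"
    using assms unfolding chains_def chain_subset_def by auto
  have "single_valued (\<Union>C)"
  proof (rule single_valuedI)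
    fix g v v' assume "(g, v) \<in> \<Union>C" "(g, v') \<in> \<Union>C"
    then obtain R S where "R \<in> C" "S \<in> C" "(g, v) \<in> R" "(g, v') \<in> S" by blast
    with coded chain show "v = v'"
      unfolding index_coded_def by (metis single_valuedD subsetD)
  qed
  moreover have "\<exists>e xs. v = Suc (to_nat (e, xs)) \<and> (\<forall>a. rkleene (\<Union>C) H e (SN a # xs) (g a))"
    if "(g, v) \<in> \<Union>C" for g v
  proof -
    from that obtain R where "R \<in> C" "(g, v) \<in> R" by blast
    with coded obtain e xs where "v = Suc (to_nat (e, xs))" "\<forall>a. rkleene R H e (SN a # xs) (g a)"
      unfolding index_coded_def by blast
    with \<open>R \<in> C\<close> show ?thesis by (blast intro: rkleene_mono)
  qed
  ultimately show ?thesis unfolding index_coded_def by blast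
qed

lemma maximal_index_coded_exists:
  "\<exists>R. index_coded H R \<and> (\<forall>R'. index_coded H R' \<longrightarrow> R \<subseteq> R' \<longrightarrow> R' = R)"
  using Zorn_Lemma[of "{R. index_coded H R}"] index_coded_Union_chain by blast

lemma maximal_index_coded_closed:
  assumes coded: "index_coded H R" and maximal: "\<forall>R'. index_coded H R' \<longrightarrow> R \<subseteq> R' \<longrightarrow> R' = R"
  shows "rkleene_closed H R"
  unfolding rkleene_closed_def
proof (intro allI impI)
  fix e xs g assume g: "\<forall>a. rkleene R H e (SN a # xs) (g a)"
  show "g \<in> Domain R"
  proof (rule ccontr)
    assume fresh: "g \<notin> Domain R"
    define R' where "R' = insert (g, Suc (to_nat (e, xs))) R"
    have "R \<subseteq> R'" unfolding R'_def by blast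
    have "single_valued R'"
      using coded fresh unfolding index_coded_def R'_def single_valued_def by blast
    moreover have "\<exists>e xs. v = Suc (to_nat (e, xs)) \<and> (\<forall>a. rkleene R' H e (SN a # xs) (g' a))"
      if "(g', v) \<in> R'" for g' v
    proof (cases "(g', v) \<in> R")
      case True
      with coded show ?thesis unfolding index_coded_def by (blast intro: rkleene_mono[OF _ \<open>R \<subseteq> R'\<close>])
    next
      case False
      with that have "g' = g" "v = Suc (to_nat (e, xs))" unfolding R'_def by auto
      with g show ?thesis by (blast intro: rkleene_mono[OF _ \<open>R \<subseteq> R'\<close>])
    qed
    ultimately have "index_coded H R'" unfolding index_coded_def by blast
    with maximal \<open>R \<subseteq> R'\<close> have "R' = R" by blast
    with fresh show False unfolding R'_def by blast
  qed
qed

lemma computable_in_constant_on_extensions: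
  assumes "computable_in M H"
  obtains R c where "single_valued R" "single_valued (R\<inverse>)" "0 \<notin> Range R"
    "\<And>G. \<forall>(g, v)\<in>R. G g = v \<Longrightarrow> M G = c"
proof -
  from assms obtain e where comp: "\<And>G. kleene e [A2 G, A2 H] (M G)"
    unfolding computable_in_def by blast
  obtain R where coded: "index_coded H R" and "\<forall>R'. index_coded H R' \<longrightarrow> R \<subseteq> R' \<longrightarrow> R' = R"
    using maximal_index_coded_exists by blast
  then have closed: "rkleene_closed H R" by (rule maximal_index_coded_closed)
  have sv: "single_valued R" using coded unfolding index_coded_def by blast
  have "0 \<notin> Range R" using coded unfolding index_coded_def by fastforce
  have computes: "rkleene R H e [SG, SH] (M G)" if "\<forall>(g, v)\<in>R. G g = v" for G
    using kleene_imp_rkleene[OF closed that comp] by simp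
  define G0 where "G0 g = (THE v. (g, v) \<in> R)" for g
  have "\<forall>(g, v)\<in>R. G0 g = v"
    unfolding G0_def using single_valued_The[OF sv] by fast
  with computes rkleene_deterministic[OF sv]
  have "M G = M G0" if "\<forall>(g, v)\<in>R. G g = v" for G
    using that by blast
  with sv index_coded_injective[OF coded] \<open>0 \<notin> Range R\<close> show thesis by (rule that)
qed

lemma differs_imp_notin_cyl: "k < n \<Longrightarrow> g k \<noteq> f k \<Longrightarrow> g \<notin> cyl (cbar f n)"
  by (auto simp: cyl_def cbar_def)

lemma LOC_point_mass:
  assumes "\<And>f. f \<noteq> g0 \<Longrightarrow> g0 \<notin> cyl (cbar f (G f))" and "N \<le> G g0"
  shows "LOC (\<lambda>g. if g = g0 then N else 0) G"
  using assms unfolding LOC_def by fastforce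

lemma cantor_diagonal:
  fixes R :: partial_type2
  assumes "single_valued (R\<inverse>)"
  obtains g0 where "g0 \<in> cantor" "\<And>f n. (f, Suc n) \<in> R \<Longrightarrow> g0 n \<noteq> f n"
proof -
  define g0 where "g0 n = (if \<exists>f. (f, Suc n) \<in> R \<and> f n = 0 then 1 else 0 :: nat)" for n
  have "g0 \<in> cantor" unfolding cantor_def g0_def by simp
  moreover have "g0 n \<noteq> f n" if "(f, Suc n) \<in> R" for f n
  proof (cases "f n = 0")
    case True
    with that show ?thesis unfolding g0_def by auto
  next
    case False
    with that assms have "\<not> (\<exists>f'. (f', Suc n) \<in> R \<and> f' n = 0)"
      by (auto dest: single_valuedD)
    with False show ?thesis unfolding g0_def by auto
  qed
  ultimately show thesis by (rule that)
qed

lemma escaping_extension: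
  fixes R :: partial_type2
  assumes "single_valued R" "single_valued (R\<inverse>)" "0 \<notin> Range R"
  obtains g0 G where "g0 \<in> cantor" "\<forall>(f, v)\<in>R. G f = v" "G g0 = N"
    "\<And>f. f \<noteq> g0 \<Longrightarrow> g0 \<notin> cyl (cbar f (G f))"
proof -
  obtain g0 where "g0 \<in> cantor" and diag: "\<And>f n. (f, Suc n) \<in> R \<Longrightarrow> g0 n \<noteq> f n"
    using cantor_diagonal[OF assms(2)] by blast
  have escapes: "g0 \<notin> cyl (cbar f v)" if "(f, v) \<in> R" for f v
  proof -
    from that assms(3) obtain n where "v = Suc n" by (cases v) auto
    with that diag show ?thesis using differs_imp_notin_cyl[of n "Suc n" g0 f] by blast
  qed
  define G where "G f = (if f \<in> Domain R then THE v. (f, v) \<in> R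
    else if f = g0 then N else Suc (LEAST k. f k \<noteq> g0 k))" for f
  have extends: "\<forall>(f, v)\<in>R. G f = v"
  proof clarify
    fix f v assume fv: "(f, v) \<in> R"
    then have "f \<in> Domain R" by blast
    with single_valued_The[OF assms(1) fv] show "G f = v" unfolding G_def by simp
  qed
  have "g0 \<notin> Domain R"
    using escapes \<open>g0 \<in> cantor\<close> by (auto simp: cyl_def cbar_def)
  then have "G g0 = N" unfolding G_def by simp
  moreover have "g0 \<notin> cyl (cbar f (G f))" if "f \<noteq> g0" for f
  proof (cases "f \<in> Domain R")
    case True
    then obtain v where "(f, v) \<in> R" by blast
    with extends escapes show ?thesis by fastforce
  next
    case False
    define k where "k = (LEAST k. f k \<noteq> g0 k)"
    from \<open>f \<noteq> g0\<close> obtain j where "f j \<noteq> g0 j" by (meson ext)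
    then have "f k \<noteq> g0 k" unfolding k_def by (rule LeastI)
    moreover from False \<open>f \<noteq> g0\<close> have "G f = Suc k" unfolding G_def k_def by simp
    ultimately show ?thesis using differs_imp_notin_cyl[of k "Suc k" g0 f] by simp
  qed
  ultimately show thesis using that[OF \<open>g0 \<in> cantor\<close> extends] by blast
qed

theorem theorem3p1:
  shows "\<not> (\<exists>M H. PR M \<and> computable_in M H)"
proof
  assume "\<exists>M H. PR M \<and> computable_in M H"
  then obtain M H where "PR M" "computable_in M H" by blast
  then obtain R c where R: "single_valued R" "single_valued (R\<inverse>)" "0 \<notin> Range R"
    and M_const: "\<And>G. \<forall>(g, v)\<in>R. G g = v \<Longrightarrow> M G = c"
    using computable_in_constant_on_extensions by metis
  obtain g0 G where "g0 \<in> cantor" and G_extends: "\<forall>(f, v)\<in>R. G f = v" and "G g0 = Suc c"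
    and "\<And>f. f \<noteq> g0 \<Longrightarrow> g0 \<notin> cyl (cbar f (G f))"
    using escaping_extension[OF R] by blast
  then have "LOC (\<lambda>g. if g = g0 then Suc c else 0) G"
    by (intro LOC_point_mass) simp_all
  with \<open>PR M\<close> \<open>g0 \<in> cantor\<close> have "Suc c \<le> M G"
    unfolding PR_def by fastforce
  moreover have "M G = c" using M_const G_extends by blast
  ultimately show False by simp
qed

end
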